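(* Let $\rho:\{C,V\}^*\to\{C,V\}^*$ be the rhythmic syncope function. Then for every $i,j>0$ and every tier $\tau$ on $\{C,V\}$, the function $\rho$ is not $i,j$-input--output strictly local on tier $\tau$.
   Context: Strings: $\lambda$ is the empty string; $\rtimes$ is a left word-boundary symbol not in any alphabet considered. For $k\ge 0$ and a string $x$, $\mathrm{suff}^k(x)$ is the string consisting of the last $k$ symbols of $\rtimes^k x$. The longest common prefix of a set of strings $A$ is denoted $\mathrm{lcp}(A)$. Rhythmic syncope: every $x\in\{C,V\}^*$ can be written uniquely as $c_0Vc_1Vc_2\cdots Vc_n$ with $c_0,\dots,c_n\in C^*$; then $\rho(c_0Vc_1V\cdots Vc_n)=c_0v_1c_1v_2c_2\cdots v_nc_n$, where $v_m=V$ if $m$ is even and $v_m=\lambda$ if $m$ is odd. For $f:\Sigma^*\to\Gamma^*$ ($\Sigma,\Gamma$ finite alphabets), $f^{\gets}(x):=\mathrm{lcp}(\{f(xy)\mid y\in\Sigma^*\})$, and for $x\in\Sigma^*$ the translation $f^{\to}_x:\Sigma^*\to\Gamma^*$ is defined by $f(xy)=f^{\gets}(x)f^{\to}_x(y)$. A tier on an alphabet $A$ is a homomorphism $\tau:A^*\to A^*$ such that for each $a\in A$, either $\tau(a)=a$ or $\tau(a)=\lambda$. Given $i,j>0$ and a tier $\tau$ on $\Sigma\cup\Gamma$, $f$ is $i,j$-input--output strictly local on tier $\tau$ ($i,j$-TIOSL) if for all $w,x\in\Sigma^*$: whenever $\mathrm{suff}^{i-1}(\tau(w))=\mathrm{suff}^{i-1}(\tau(x))$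 and $\mathrm{suff}^{j-1}(\tau(f^{\gets}(w)))=\mathrm{suff}^{j-1}(\tau(f^{\gets}(x)))$, we have $f^{\to}_w=f^{\to}_x$. *)

theory Defs
  imports Main "HOL-Library.Sublist"
begin

datatype cv = C | V

text \<open>The boundary symbol is None; genuine symbols are wrapped in Some.
  suff k x = last k symbols of (boundary^k) x.\<close>
definition suff :: "nat \<Rightarrow> 'a list \<Rightarrow> 'a option list" where
  "suff k x = (let w = replicate k None @ map Some x in drop (length w - k) w)"

definition lcp :: "'a list set \<Rightarrow> 'a list" where
  "lcp A = Longest_common_prefix A"

definition fwd :: "('a list \<Rightarrow> 'b list) \<Rightarrow> 'a list \<Rightarrow> 'b list" where
  "fwd f x = lcp {f (x @ y) | y. True}"

text \<open>Translation: f (x @ y) = fwd f x @ trans f x y.\<close>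
definition trans_fun :: "('a list \<Rightarrow> 'b list) \<Rightarrow> 'a list \<Rightarrow> 'a list \<Rightarrow> 'b list" where
  "trans_fun f x y = drop (length (fwd f x)) (f (x @ y))"

definition is_tier :: "('a list \<Rightarrow> 'a list) \<Rightarrow> bool" where
  "is_tier \<tau> \<longleftrightarrow> \<tau> [] = [] \<and> (\<forall>u w. \<tau> (u @ w) = \<tau> u @ \<tau> w)
     \<and> (\<forall>a. \<tau> [a] = [a] \<or> \<tau> [a] = [])"

definition TIOSL :: "nat \<Rightarrow> nat \<Rightarrow> ('a list \<Rightarrow> 'a list) \<Rightarrow> ('a list \<Rightarrow> 'a list) \<Rightarrow> bool" where
  "TIOSL i j \<tau> f \<longleftrightarrow> (\<forall>w x.
     suff (i - 1) (\<tau> w) = suff (i - 1) (\<tau> x) \<and>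
     suff (j - 1) (\<tau> (fwd f w)) = suff (j - 1) (\<tau> (fwd f x))
     \<longrightarrow> trans_fun f w = trans_fun f x)"

text \<open>Rhythmic syncope: the m-th V is kept iff m is even.
  The boolean flag says whether the next V is kept.\<close>
fun rho_aux :: "bool \<Rightarrow> cv list \<Rightarrow> cv list" where
  "rho_aux b [] = []"
| "rho_aux b (C # xs) = C # rho_aux b xs"
| "rho_aux b (V # xs) = (if b then [V] else []) @ rho_aux (\<not> b) xs"

definition rho :: "cv list \<Rightarrow> cv list" where
  "rho x = rho_aux False x"

end

theory Submission
  imports Defs
begin

text \<open>Syncope never retracts output, so the output committed after reading x is \<rho> x itself.
  The words V^(2n) and V^(2n+1) have the same output V^n, and on any tier their images are
  either both empty or both runs of at least n V's, so they agree on every input window of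
  length at most n. Yet one
  more V is deleted after V^(2n) and kept after V^(2n+1): the parity of the number of V's read
  is information that no window of bounded length can see.\<close>

lemma fwd_eq_if_prefix_append:
  assumes "\<And>y. prefix (f x) (f (x @ y))"
  shows "fwd f x = f x"
  unfolding fwd_def lcp_def
proof (rule Longest_common_prefix_eq)
  show "{f (x @ y) |y. True} \<noteq> {}" by blast
  show "\<forall>zs\<in>{f (x @ y) |y. True}. prefix (f x) zs" using assms by blast
  show "\<forall>qs. (\<forall>zs\<in>{f (x @ y) |y. True}. prefix qs zs) \<longrightarrow> length qs \<le> length (f x)"
  proof (intro allI impI)
    fix qs assume "\<forall>zs\<in>{f (x @ y) |y. True}. prefix qs zs"
    then have "prefix qs (f (x @ []))" by blast
    then show "length qs \<le> length (f x)" by (simp add: prefix_length_le)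
  qed
qed

lemma tier_replicate:
  assumes "is_tier \<tau>"
  shows "\<tau> (replicate n a) = concat (replicate n (\<tau> [a]))"
proof (induction n)
  case 0 then show ?case using assms by (simp add: is_tier_def)
next
  case (Suc n)
  have "\<tau> ([a] @ replicate n a) = \<tau> [a] @ \<tau> (replicate n a)"
    using assms unfolding is_tier_def by blast
  then show ?case using Suc by simp
qed

lemma suff_tier_replicate_eq:
  assumes "is_tier \<tau>" and "k \<le> m" and "k \<le> n"
  shows "suff k (\<tau> (replicate m a)) = suff k (\<tau> (replicate n a))"
proof -
  have "\<tau> [a] = [a] \<or> \<tau> [a] = []" using assms(1) by (simp add: is_tier_def)
  then show ?thesis
    unfolding tier_replicate[OF assms(1)] using assms(2,3) by (auto simp: suff_def)
qed

lemma prefix_rho_aux_append: "prefix (rho_aux b xs) (rho_aux b (xs @ ys))"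
proof (induction xs arbitrary: b)
  case Nil then show ?case by simp
next
  case (Cons a xs) then show ?case by (cases a; cases b) auto
qed

lemma fwd_rho: "fwd rho x = rho x"
  by (rule fwd_eq_if_prefix_append) (simp add: rho_def prefix_rho_aux_append)

lemma trans_fun_rho: "trans_fun rho x y = drop (length (rho x)) (rho (x @ y))"
  by (simp add: trans_fun_def fwd_rho)

lemma rho_aux_replicate_V:
  "rho_aux b (replicate n V) = replicate ((n + of_bool b) div 2) V"
proof (induction n arbitrary: b)
  case 0 then show ?case by (cases b) auto
next
  case (Suc n) then show ?case by (cases b) auto
qed

lemma rho_replicate_V: "rho (replicate n V) = replicate (n div 2) V"
  by (simp add: rho_def rho_aux_replicate_V)

lemma trans_fun_rho_replicate_V:
  "trans_fun rho (replicate n V) [V] = (if odd n then [V] else [])"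
proof -
  have "replicate n V @ [V] = replicate (Suc n) V" by (simp add: replicate_append_same)
  then have "trans_fun rho (replicate n V) [V] = drop (n div 2) (replicate (Suc n div 2) V)"
    by (simp add: trans_fun_rho rho_replicate_V del: replicate.simps)
  moreover have "Suc n div 2 - n div 2 = of_bool (odd n)" by (cases "odd n") (auto elim!: oddE)
  ultimately show ?thesis by simp
qed

theorem proposition10:
  fixes i j :: nat and \<tau> :: "cv list \<Rightarrow> cv list"
  assumes "i > 0" and "j > 0" and "is_tier \<tau>"
  shows "\<not> TIOSL i j \<tau> rho"
proof
  assume TIOSL: "TIOSL i j \<tau> rho"
  let ?w = "replicate (2 * i) V" and ?x = "replicate (2 * i + 1) V"
  have "suff (i - 1) (\<tau> ?w) = suff (i - 1) (\<tau> ?x)"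
    by (rule suff_tier_replicate_eq[OF assms(3)]) simp_all
  moreover have "fwd rho ?w = fwd rho ?x"
    by (simp add: fwd_rho rho_replicate_V del: replicate.simps)
  ultimately have "trans_fun rho ?w = trans_fun rho ?x"
    using TIOSL unfolding TIOSL_def by metis
  then have "trans_fun rho ?w [V] = trans_fun rho ?x [V]" by simp
  then show False by (simp add: trans_fun_rho_replicate_V del: replicate.simps)
qed

end
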